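(* Let $m\ge1$ and, for each $i\in[m]$, observe $X_{ij}=\mu_{xi}+\epsilon_{xij}$, $j\in[n_{xi}]$, and $Y_{ij}=\mu_{yi}+\epsilon_{yij}$, $j\in[n_{yi}]$, with $\mathbb{E}\epsilon_{xij}=\mathbb{E}\epsilon_{yij}=0$, unknown constants $\mu_{xi},\mu_{yi}$, and $n_{xi}\ge4$, $n_{yi}\ge4$. Let $\mathcal{H}_0=\{i:\mu_{xi}=\mu_{yi}\}$, $\mathbf{X}_i=(X_{ij}:j\in[n_{xi}])$, $\mathbf{Y}_i=(Y_{ij}:j\in[n_{yi}])$ and $\mathbf{K}_{-i}=(\mathbf{X}_k,\mathbf{Y}_k:k\ne i)$. Assume that for every $i\in\mathcal{H}_0$: conditional on $\mathbf{K}_{-i}$, $\{\epsilon_{xij}\}_j$ is independent of $\{\epsilon_{yij}\}_j$; conditional on $\mathbf{K}_{-i}$, $\{\epsilon_{xij}\}_j$ are i.i.d. and $\{\epsilon_{yij}\}_j$ are i.i.d.; and their conditional densities satisfy $f^{\epsilon}_{xi}(-x\mid\mathbf{K}_{-i})=f^{\epsilon}_{xi}(x\mid\mathbf{K}_{-i})$ and $f^{\epsilon}_{yi}(-y\mid\mathbf{K}_{-i})=f^{\epsilon}_{yi}(y\mid\mathbf{K}_{-i})$. Construct $(T_i,T_i^0)$ as follows. Randomly (independently of the data) partition $[n_{xi}]$ into $\mathcal{N}_{xi1},\mathcal{N}_{xi2}$ of sizes $n_{xi1}=\lceil n_{xi}/2\rceil$, $n_{xi2}=n_{xi}-n_{xi1}$,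 and $[n_{yi}]$ into $\mathcal{N}_{yi1},\mathcal{N}_{yi2}$ of sizes $n_{yi1}=\lceil n_{yi}/2\rceil$, $n_{yi2}=n_{yi}-n_{yi1}$. For $k=1,2$ let $\bar X_{ik},\bar Y_{ik}$ be the sample means and $S^2_{xik},S^2_{yik}$ the sample variances (divisor size minus one) over $\mathcal{N}_{xik}$, $\mathcal{N}_{yik}$. Let $S^2_{xi}=\frac{(n_{xi1}-1)S^2_{xi1}+(n_{xi2}-1)S^2_{xi2}}{n_{xi}-2}$, $S^2_{yi}=\frac{(n_{yi1}-1)S^2_{yi1}+(n_{yi2}-1)S^2_{yi2}}{n_{yi}-2}$, $V_i=(\bar X_{i1}-\bar Y_{i1})+(\bar X_{i2}-\bar Y_{i2})$, $V_i^0=(\bar X_{i1}-\bar Y_{i1})-(\bar X_{i2}-\bar Y_{i2})$, $S_i=\sqrt{\frac{n_{xi}}{n_{xi1}n_{xi2}}S^2_{xi}+\frac{n_{yi}}{n_{yi1}n_{yi2}}S^2_{yi}}$, and $T_i=\Phi^{-1}\{G_{t,n_{xi}+n_{yi}-4}(V_i/S_i)\}$, $T_i^0=\Phi^{-1}\{G_{t,n_{xi}+n_{yi}-4}(V_i^0/S_i)\}$. Then for every $i\in\mathcal{H}_0$, $$(T_i,T_i^0\mid \mathbf{T}_{-i},\mathbf{T}^0_{-i})\stackrel{d}{=}(T_i^0,T_i\mid \mathbf{T}_{-i},\mathbf{T}^0_{-i}),$$ where $\mathbf{T}_{-i}=(T_k:k\ne i)$ and $\mathbf{T}^0_{-i}=(T^0_k:k\ne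 i)$.
   Context: $\Phi$ is the standard normal CDF and $G_{t,\nu}$ the CDF of the $t$-distribution with $\nu$ degrees of freedom. *)

theory Defs
  imports "HOL-Probability.Probability"
begin

definition Phi :: "real \<Rightarrow> real" where
  "Phi x = (LBINT t:{..x}. std_normal_density t)"

definition Phi_inv :: "real \<Rightarrow> real" where
  "Phi_inv p = (THE x. Phi x = p)"

definition t_density :: "real \<Rightarrow> real \<Rightarrow> real" where
  "t_density nu x = Gamma ((nu + 1) / 2) / (sqrt (nu * pi) * Gamma (nu / 2))
      * (1 + x\<^sup>2 / nu) powr (- (nu + 1) / 2)"

definition t_cdf :: "real \<Rightarrow> real \<Rightarrow> real" where
  "t_cdf nu x = (LBINT t:{..x}. t_density nu t)"

definition smean :: "nat set \<Rightarrow> (nat \<Rightarrow> real) \<Rightarrow> real" where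
  "smean A f = (\<Sum>j\<in>A. f j) / real (card A)"

definition svar :: "nat set \<Rightarrow> (nat \<Rightarrow> real) \<Rightarrow> real" where
  "svar A f = (\<Sum>j\<in>A. (f j - smean A f)\<^sup>2) / (real (card A) - 1)"

text \<open>Split statistics. Arguments: sample sizes nx, ny; first halves Nx1 \<subseteq> {..<nx},
  Ny1 \<subseteq> {..<ny} (the second halves are the complements); sample vectors x, y.\<close>
definition V_stat :: "nat \<Rightarrow> nat \<Rightarrow> nat set \<Rightarrow> nat set \<Rightarrow> (nat \<Rightarrow> real) \<Rightarrow> (nat \<Rightarrow> real) \<Rightarrow> real" where
  "V_stat nx ny Nx1 Ny1 x y =
     (smean Nx1 x - smean Ny1 y) + (smean ({..<nx} - Nx1) x - smean ({..<ny} - Ny1) y)"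

definition V0_stat :: "nat \<Rightarrow> nat \<Rightarrow> nat set \<Rightarrow> nat set \<Rightarrow> (nat \<Rightarrow> real) \<Rightarrow> (nat \<Rightarrow> real) \<Rightarrow> real" where
  "V0_stat nx ny Nx1 Ny1 x y =
     (smean Nx1 x - smean Ny1 y) - (smean ({..<nx} - Nx1) x - smean ({..<ny} - Ny1) y)"

definition S_stat :: "nat \<Rightarrow> nat \<Rightarrow> nat set \<Rightarrow> nat set \<Rightarrow> (nat \<Rightarrow> real) \<Rightarrow> (nat \<Rightarrow> real) \<Rightarrow> real" where
  "S_stat nx ny Nx1 Ny1 x y =
     (let Nx2 = {..<nx} - Nx1; Ny2 = {..<ny} - Ny1;
          nx1 = real (card Nx1); nx2 = real (card Nx2);
          ny1 = real (card Ny1); ny2 = real (card Ny2);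
          S2x = ((nx1 - 1) * svar Nx1 x + (nx2 - 1) * svar Nx2 x) / (real nx - 2);
          S2y = ((ny1 - 1) * svar Ny1 y + (ny2 - 1) * svar Ny2 y) / (real ny - 2)
      in sqrt (real nx / (nx1 * nx2) * S2x + real ny / (ny1 * ny2) * S2y))"

definition T_stat :: "nat \<Rightarrow> nat \<Rightarrow> nat set \<Rightarrow> nat set \<Rightarrow> (nat \<Rightarrow> real) \<Rightarrow> (nat \<Rightarrow> real) \<Rightarrow> real" where
  "T_stat nx ny Nx1 Ny1 x y =
     Phi_inv (t_cdf (real nx + real ny - 4) (V_stat nx ny Nx1 Ny1 x y / S_stat nx ny Nx1 Ny1 x y))"

definition T0_stat :: "nat \<Rightarrow> nat \<Rightarrow> nat set \<Rightarrow> nat set \<Rightarrow> (nat \<Rightarrow> real) \<Rightarrow> (nat \<Rightarrow> real) \<Rightarrow> real" where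
  "T0_stat nx ny Nx1 Ny1 x y =
     Phi_inv (t_cdf (real nx + real ny - 4) (V0_stat nx ny Nx1 Ny1 x y / S_stat nx ny Nx1 Ny1 x y))"

definition valid_partitions :: "nat \<Rightarrow> (nat \<Rightarrow> nat) \<Rightarrow> (nat \<Rightarrow> nat) \<Rightarrow> (nat \<Rightarrow> nat set \<times> nat set) set" where
  "valid_partitions m nx ny = {p. \<forall>k.
      (k < m \<longrightarrow> fst (p k) \<subseteq> {..<nx k} \<and> card (fst (p k)) = nat \<lceil>real (nx k) / 2\<rceil>
                 \<and> snd (p k) \<subseteq> {..<ny k} \<and> card (snd (p k)) = nat \<lceil>real (ny k) / 2\<rceil>)
    \<and> (m \<le> k \<longrightarrow> p k = ({}, {}))}"

definition group_space :: "(nat \<Rightarrow> nat) \<Rightarrow> (nat \<Rightarrow> nat) \<Rightarrow> nat \<Rightarrow> ((nat \<Rightarrow> real) \<times> (nat \<Rightarrow> real)) measure" where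
  "group_space nx ny k = PiM {..<nx k} (\<lambda>_. borel) \<Otimes>\<^sub>M PiM {..<ny k} (\<lambda>_. borel)"

end

theory Submission
  imports Defs
begin

(* Under the null mu_xi = mu_yi, reflect the second-half observations of group i about the common
   mean, x |-> 2 mu - x. This keeps the first-half means and all sample variances and negates the
   difference of the second-half means, so it exchanges V_i and V_i^0 while fixing S_i and the
   statistics of the other groups: it swaps T_i and T_i^0. On the errors the reflection is a sign
   flip of some coordinates; since, given K_{-i}, the errors of group i are independent with
   symmetric densities, it preserves the joint law of (K_{-i}, X_i, Y_i). The partition is
   independent of the data and takes finitely many values, so conditioning on it gives the claim. *)

section \<open>Normal and Student t distribution functions\<close>

lemma Phi_eq_cdf: "Phi = cdf std_normal_distribution"
proof
  fix x
  have "Phi x = integral\<^sup>L lborel (\<lambda>t. std_normal_density t *\<^sub>R indicator {..x} t)"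
    unfolding Phi_def set_lebesgue_integral_def by (simp add: mult.commute)
  also have "\<dots> = integral\<^sup>L std_normal_distribution (indicator {..x})"
    by (subst integral_density) (auto simp: normal_density_nonneg)
  finally show "Phi x = cdf std_normal_distribution x"
    by (simp add: cdf_def)
qed

lemma real_distribution_std_normal: "real_distribution std_normal_distribution"
  using prob_space_normal_density by (auto simp: real_distribution_def real_distribution_axioms_def)

lemma isCont_Phi: "isCont Phi x"
proof -
  interpret real_distribution std_normal_distribution
    by (rule real_distribution_std_normal)
  have "AE t in lborel. t \<notin> {x}"
    by (intro AE_not_in) (simp add: null_sets_def)
  then have "AE t in lborel. t \<in> {x} \<longrightarrow> std_normal_density t = 0"
    by eventually_elim simp
  then have "{x} \<in> null_sets std_normal_distribution"
    by (subst null_sets_density_iff) auto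
  then show ?thesis
    unfolding Phi_eq_cdf by (subst isCont_cdf) (simp add: measure_eq_0_null_sets)
qed

lemma strict_mono_Phi: "strict_mono Phi"
proof
  fix x y :: real
  assume "x < y"
  interpret real_distribution std_normal_distribution
    by (rule real_distribution_std_normal)
  have "prob {x<..y} \<noteq> 0"
  proof
    assume "prob {x<..y} = 0"
    then have "AE t in std_normal_distribution. t \<notin> {x<..y}"
      by (simp add: prob_eq_0)
    then have "AE t in lborel. t \<notin> {x<..y}"
      by (simp add: AE_density normal_density_pos)
    then have "{x<..y} \<in> null_sets lborel"
      using AE_iff_null_sets[of "{x<..y}" lborel] by simp
    with \<open>x < y\<close> show False
      by (simp add: null_sets_def)
  qed
  then have "prob {x<..y} > 0"
    using measure_nonneg[of std_normal_distribution "{x<..y}"] by linarith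
  then show "Phi x < Phi y"
    using cdf_diff_eq[OF \<open>x < y\<close>] unfolding Phi_eq_cdf by linarith
qed

lemma Phi_inv_Phi [simp]: "Phi_inv (Phi x) = x"
  unfolding Phi_inv_def using strict_mono_Phi by (auto dest: strict_mono_eq)

text \<open>Off the range of \<^const>\<open>Phi\<close>, \<^const>\<open>Phi_inv\<close> is the junk value \<open>THE x. False\<close>, so it is
  monotone on both pieces of \<open>{range Phi, - range Phi}\<close>.\<close>

lemma borel_measurable_Phi_inv: "Phi_inv \<in> borel_measurable borel"
proof (rule borel_measurable_piecewise_mono[of "{range Phi, - range Phi}"])
  have "connected (range Phi)"
    by (rule connected_continuous_image) (auto intro: continuous_at_imp_continuous_on isCont_Phi)
  then have "range Phi \<in> sets borel"
    by (intro real_interval_borel_measurable) (simp add: is_interval_connected_1)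
  then show "countable {range Phi, - range Phi}" "\<Union> {range Phi, - range Phi} = UNIV"
    "\<And>S. S \<in> {range Phi, - range Phi} \<Longrightarrow> S \<in> sets borel"
    by auto
  have "mono_on (range Phi) Phi_inv"
    using strict_mono_Phi by (auto intro!: mono_onI simp: strict_mono_less_eq)
  moreover have "Phi_inv p = (THE x. False)" if "p \<notin> range Phi" for p
    using that unfolding Phi_inv_def by (metis rangeI)
  then have "mono_on (- range Phi) Phi_inv"
    by (intro mono_onI) simp
  ultimately show "\<And>S. S \<in> {range Phi, - range Phi} \<Longrightarrow> mono_on S Phi_inv"
    by auto
qed

lemma borel_measurable_t_cdf: "t_cdf nu \<in> borel_measurable borel"
proof -
  have [measurable]: "t_density nu \<in> borel_measurable borel"
    unfolding t_density_def[abs_def] by measurable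
  have "(\<lambda>(x, t). indicator {..x} t *\<^sub>R t_density nu t) \<in> borel_measurable (borel \<Otimes>\<^sub>M lborel)"
    unfolding measurable_cong_sets[OF sets_pair_measure_cong[OF refl sets_lborel] refl]
    by (simp add: indicator_def) measurable
  from lborel.borel_measurable_lebesgue_integral[OF this] show ?thesis
    unfolding t_cdf_def[abs_def] set_lebesgue_integral_def .
qed

lemmas borel_measurable_Phi_inv_compose [measurable] = measurable_compose[OF _ borel_measurable_Phi_inv]
lemmas borel_measurable_t_cdf_compose [measurable] = measurable_compose[OF _ borel_measurable_t_cdf]

section \<open>Split-sample statistics\<close>

lemma borel_measurable_smean:
  "(\<And>j. j \<in> A \<Longrightarrow> (\<lambda>\<omega>. f \<omega> j) \<in> borel_measurable N) \<Longrightarrow> (\<lambda>\<omega>. smean A (f \<omega>)) \<in> borel_measurable N"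
  unfolding smean_def by (intro borel_measurable_divide borel_measurable_sum) auto

lemma borel_measurable_svar:
  "(\<And>j. j \<in> A \<Longrightarrow> (\<lambda>\<omega>. f \<omega> j) \<in> borel_measurable N) \<Longrightarrow> (\<lambda>\<omega>. svar A (f \<omega>)) \<in> borel_measurable N"
  unfolding svar_def
  by (intro borel_measurable_divide borel_measurable_sum borel_measurable_power borel_measurable_diff
      borel_measurable_smean) auto

lemma smean_cong: "(\<And>j. j \<in> A \<Longrightarrow> x' j = x j) \<Longrightarrow> smean A x' = smean A x"
  unfolding smean_def by simp

lemma svar_cong: "(\<And>j. j \<in> A \<Longrightarrow> x' j = x j) \<Longrightarrow> svar A x' = svar A x"
  unfolding svar_def using smean_cong[of A x' x] by simp

lemma smean_reflect:
  assumes "finite A" "A \<noteq> {}" "\<And>j. j \<in> A \<Longrightarrow> x' j = c - x j"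
  shows "smean A x' = c - smean A x"
proof -
  have "(\<Sum>j\<in>A. x' j) = real (card A) * c - (\<Sum>j\<in>A. x j)"
    using assms(3) by (simp add: sum_subtractf)
  with assms(1,2) show ?thesis
    by (simp add: smean_def field_simps)
qed

lemma svar_reflect:
  assumes "finite A" "A \<noteq> {}" "\<And>j. j \<in> A \<Longrightarrow> x' j = c - x j"
  shows "svar A x' = svar A x"
  unfolding svar_def
  by (intro arg_cong2[where f = "(/)"] sum.cong)
    (simp_all add: assms(3) smean_reflect[OF assms] power2_eq_square algebra_simps)

definition T_pair :: "nat \<Rightarrow> nat \<Rightarrow> nat set \<times> nat set \<Rightarrow> (nat \<Rightarrow> real) \<times> (nat \<Rightarrow> real) \<Rightarrow> real \<times> real"
  where "T_pair nx ny N xy =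
    (T_stat nx ny (fst N) (snd N) (fst xy) (snd xy), T0_stat nx ny (fst N) (snd N) (fst xy) (snd xy))"

lemma measurable_T_pair:
  assumes "fst N \<subseteq> {..<nx}" "snd N \<subseteq> {..<ny}"
  shows "T_pair nx ny N \<in> PiM {..<nx} (\<lambda>_. borel) \<Otimes>\<^sub>M PiM {..<ny} (\<lambda>_. borel) \<rightarrow>\<^sub>M borel"
proof -
  let ?G = "PiM {..<nx} (\<lambda>_. borel :: real measure) \<Otimes>\<^sub>M PiM {..<ny} (\<lambda>_. borel :: real measure)"
  have x: "(\<lambda>z. fst z j) \<in> borel_measurable ?G" if "j < nx" for j
    using that by (auto intro: measurable_compose[OF _ measurable_component_singleton])
  have y: "(\<lambda>z. snd z j) \<in> borel_measurable ?G" if "j < ny" for j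
    using that by (auto intro: measurable_compose[OF _ measurable_component_singleton])
  have sx: "(\<lambda>z. smean B (fst z)) \<in> borel_measurable ?G" "(\<lambda>z. svar B (fst z)) \<in> borel_measurable ?G"
    if "B \<subseteq> {..<nx}" for B
    using that x by (auto intro!: borel_measurable_smean borel_measurable_svar)
  have sy: "(\<lambda>z. smean B (snd z)) \<in> borel_measurable ?G" "(\<lambda>z. svar B (snd z)) \<in> borel_measurable ?G"
    if "B \<subseteq> {..<ny}" for B
    using that y by (auto intro!: borel_measurable_smean borel_measurable_svar)
  note [measurable] = sx[OF assms(1)] sx[OF Diff_subset] sy[OF assms(2)] sy[OF Diff_subset]
  show ?thesis
    unfolding T_pair_def T_stat_def T0_stat_def V_stat_def V0_stat_def S_stat_def Let_def
    by measurable
qed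

lemma T_pair_cong:
  assumes "fst N \<subseteq> {..<nx}" "snd N \<subseteq> {..<ny}" "\<And>j. j < nx \<Longrightarrow> x' j = x j" "\<And>j. j < ny \<Longrightarrow> y' j = y j"
  shows "T_pair nx ny N (x', y') = T_pair nx ny N (x, y)"
proof -
  have "smean B x' = smean B x" "svar B x' = svar B x" if "B \<subseteq> {..<nx}" for B
    using that assms(3) by (auto intro!: smean_cong svar_cong)
  moreover have "smean B y' = smean B y" "svar B y' = svar B y" if "B \<subseteq> {..<ny}" for B
    using that assms(4) by (auto intro!: smean_cong svar_cong)
  ultimately show ?thesis
    using assms(1,2)
    by (simp add: T_pair_def T_stat_def T0_stat_def V_stat_def V0_stat_def S_stat_def Let_def)
qed

text \<open>Reflecting the second halves about \<open>c\<close> negates the difference of the second-half means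
  (\<open>c\<close> cancels) and keeps every sample variance, so \<open>V\<close> and \<open>V0\<close> trade places and \<open>S\<close> is fixed.\<close>

lemma T_pair_reflect_second_halves:
  assumes "{..<nx} - fst N \<noteq> {}" "{..<ny} - snd N \<noteq> {}"
    and "\<And>j. j \<in> fst N \<Longrightarrow> x' j = x j" "\<And>j. j \<in> {..<nx} - fst N \<Longrightarrow> x' j = c - x j"
    and "\<And>j. j \<in> snd N \<Longrightarrow> y' j = y j" "\<And>j. j \<in> {..<ny} - snd N \<Longrightarrow> y' j = c - y j"
  shows "T_pair nx ny N (x', y') = prod.swap (T_pair nx ny N (x, y))"
proof -
  have first_halves: "smean (fst N) x' = smean (fst N) x" "svar (fst N) x' = svar (fst N) x"
    "smean (snd N) y' = smean (snd N) y" "svar (snd N) y' = svar (snd N) y"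
    using assms(3,5) by (auto intro!: smean_cong svar_cong)
  have second_halves: "smean ({..<nx} - fst N) x' = c - smean ({..<nx} - fst N) x"
    "svar ({..<nx} - fst N) x' = svar ({..<nx} - fst N) x"
    "smean ({..<ny} - snd N) y' = c - smean ({..<ny} - snd N) y"
    "svar ({..<ny} - snd N) y' = svar ({..<ny} - snd N) y"
    using assms(1,2,4,6) by (auto intro!: smean_reflect svar_reflect)
  have "V_stat nx ny (fst N) (snd N) x' y' = V0_stat nx ny (fst N) (snd N) x y"
    "V0_stat nx ny (fst N) (snd N) x' y' = V_stat nx ny (fst N) (snd N) x y"
    unfolding V_stat_def V0_stat_def first_halves second_halves by simp_all
  moreover have "S_stat nx ny (fst N) (snd N) x' y' = S_stat nx ny (fst N) (snd N) x y"
    unfolding S_stat_def Let_def first_halves second_halves ..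
  ultimately show ?thesis
    by (simp add: T_pair_def T_stat_def T0_stat_def)
qed

section \<open>Sign flips of coordinates\<close>

definition flip_coords :: "'i set \<Rightarrow> 'i set \<Rightarrow> ('i \<Rightarrow> real) \<Rightarrow> 'i \<Rightarrow> real"
  where "flip_coords I F a = (\<lambda>j\<in>I. if j \<in> F then - a j else a j)"

lemma measurable_flip_coords:
  assumes "(uminus :: real \<Rightarrow> real) \<in> N \<rightarrow>\<^sub>M N"
  shows "flip_coords I F \<in> PiM I (\<lambda>_. N) \<rightarrow>\<^sub>M PiM I (\<lambda>_. N)"
  unfolding flip_coords_def using assms
  by (intro measurable_restrict) (auto intro!: measurable_If measurable_compose[OF measurable_component_singleton])

lemma measurable_flip_coords_borel [measurable]:
  "flip_coords I F \<in> PiM I (\<lambda>_. borel) \<rightarrow>\<^sub>M PiM I (\<lambda>_. borel)"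
  by (rule measurable_flip_coords) simp

lemma measurable_flip_coords_lborel:
  "flip_coords I F \<in> PiM I (\<lambda>_. lborel) \<rightarrow>\<^sub>M PiM I (\<lambda>_. lborel)"
  by (rule measurable_flip_coords) simp

lemma product_sigma_finite_lborel: "product_sigma_finite (\<lambda>_. lborel :: real measure)"
  by (simp add: product_sigma_finite_def lborel.sigma_finite_measure_axioms)

lemma distr_flip_coords_PiM_lborel:
  assumes "finite I"
  shows "distr (PiM I (\<lambda>_. lborel)) (PiM I (\<lambda>_. lborel)) (flip_coords I F) = PiM I (\<lambda>_. lborel :: real measure)"
proof (rule product_sigma_finite.PiM_eqI[OF product_sigma_finite_lborel assms])
  fix A assume A: "\<And>j. j \<in> I \<Longrightarrow> A j \<in> sets (lborel :: real measure)"
  let ?A' = "\<lambda>j. if j \<in> F then uminus -` A j else A j"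
  have A': "?A' j \<in> sets lborel" if "j \<in> I" for j
    using A[OF that] by (auto intro!: measurable_sets_borel[of "uminus :: real \<Rightarrow> real"])
  have "flip_coords I F -` Pi\<^sub>E I A \<inter> space (PiM I (\<lambda>_. lborel)) = Pi\<^sub>E I ?A'"
    by (auto simp: flip_coords_def space_PiM PiE_def Pi_def extensional_def split: if_splits)
  then have "emeasure (distr (PiM I (\<lambda>_. lborel)) (PiM I (\<lambda>_. lborel)) (flip_coords I F)) (Pi\<^sub>E I A)
      = emeasure (PiM I (\<lambda>_. lborel)) (Pi\<^sub>E I ?A')"
    using A by (simp add: emeasure_distr measurable_flip_coords_lborel sets_PiM_I_finite assms)
  also have "\<dots> = (\<Prod>j\<in>I. emeasure lborel (?A' j))"
    using A' by (rule product_sigma_finite.emeasure_PiM[OF product_sigma_finite_lborel assms])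
  also have "\<dots> = (\<Prod>j\<in>I. emeasure lborel (A j))"
  proof (intro prod.cong refl)
    fix j assume "j \<in> I"
    have "emeasure lborel (uminus -` A j) = emeasure lborel (A j)"
      using emeasure_distr[of uminus lborel borel "A j"] A[OF \<open>j \<in> I\<close>]
      by (simp add: lborel_distr_uminus)
    then show "emeasure lborel (?A' j) = emeasure lborel (A j)"
      by simp
  qed
  finally show "emeasure (distr (PiM I (\<lambda>_. lborel)) (PiM I (\<lambda>_. lborel)) (flip_coords I F)) (Pi\<^sub>E I A)
      = (\<Prod>j\<in>I. emeasure lborel (A j))" .
qed simp

lemma nn_integral_flip_coords_symmetric_density:
  fixes f :: "real \<Rightarrow> real"
  assumes I: "finite I" and f: "f \<in> borel_measurable borel" and sym: "\<And>x. f (- x) = f x"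
    and A: "A \<in> sets (PiM I (\<lambda>_. borel :: real measure))"
  shows "(\<integral>\<^sup>+ a \<in> flip_coords I F -` A \<inter> space (PiM I (\<lambda>_. borel)). (\<Prod>j\<in>I. ennreal (f (a j))) \<partial>PiM I (\<lambda>_. lborel))
       = (\<integral>\<^sup>+ a \<in> A. (\<Prod>j\<in>I. ennreal (f (a j))) \<partial>PiM I (\<lambda>_. lborel))"
proof -
  let ?P = "PiM I (\<lambda>_. lborel :: real measure)"
  define g where "g a = (\<Prod>j\<in>I. ennreal (f (a j))) * indicator A a" for a
  have g: "g \<in> borel_measurable ?P"
    using A f unfolding g_def sets_PiM_cong[OF refl sets_lborel] by measurable
  have flip_g: "g (flip_coords I F a) = (\<Prod>j\<in>I. ennreal (f (a j)))
      * indicator (flip_coords I F -` A \<inter> space (PiM I (\<lambda>_. borel))) a" if "a \<in> space ?P" for a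
    using that by (auto simp: g_def flip_coords_def sym indicator_def space_PiM intro!: prod.cong)
  have "(\<integral>\<^sup>+ a \<in> A. (\<Prod>j\<in>I. ennreal (f (a j))) \<partial>?P) = (\<integral>\<^sup>+ a. g a \<partial>distr ?P ?P (flip_coords I F))"
    by (simp add: distr_flip_coords_PiM_lborel[OF I] g_def)
  also have "\<dots> = (\<integral>\<^sup>+ a. g (flip_coords I F a) \<partial>?P)"
    by (rule nn_integral_distr[OF measurable_flip_coords_lborel]) (simp add: g)
  finally show ?thesis
    by (simp add: flip_g cong: nn_integral_cong)
qed

lemma sets_pair_pair_measure:
  "sets (M1 \<Otimes>\<^sub>M (M2 \<Otimes>\<^sub>M M3)) = sigma_sets (space M1 \<times> (space M2 \<times> space M3))
     {C \<times> (A \<times> B) | C A B. C \<in> sets M1 \<and> A \<in> sets M2 \<and> B \<in> sets M3}"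
    (is "_ = sigma_sets ?\<Omega> ?E")
proof -
  let ?E23 = "{A \<times> B | A B. A \<in> sets M2 \<and> B \<in> sets M3}"
  have E23: "?E23 \<subseteq> Pow (space (M2 \<Otimes>\<^sub>M M3))"
    by (auto simp: space_pair_measure dest: sets.sets_into_space)
  have E: "?E \<subseteq> Pow ?\<Omega>"
    by (auto dest: sets.sets_into_space)
  have "sets (M1 \<Otimes>\<^sub>M (M2 \<Otimes>\<^sub>M M3))
      = sets (sigma (space M1 \<times> space (M2 \<Otimes>\<^sub>M M3)) {C \<times> D | C D. C \<in> sets M1 \<and> D \<in> ?E23})"
  proof (rule sets_pair_eq[OF sets.space_closed _ _ _ _ E23])
    show "sets M1 = sigma_sets (space M1) (sets M1)"
      by (simp add: sets.sigma_sets_eq)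
    show "sets (M2 \<Otimes>\<^sub>M M3) = sigma_sets (space (M2 \<Otimes>\<^sub>M M3)) ?E23"
      by (simp add: sets_pair_measure space_pair_measure)
    show "countable {space M1}" "{space M1} \<subseteq> sets M1" "\<Union> {space M1} = space M1"
      by auto
    show "countable {space M2 \<times> space M3}" "{space M2 \<times> space M3} \<subseteq> ?E23"
      "\<Union> {space M2 \<times> space M3} = space (M2 \<Otimes>\<^sub>M M3)"
      by (auto simp: space_pair_measure)
  qed
  also have "{C \<times> D | C D. C \<in> sets M1 \<and> D \<in> ?E23} = ?E"
    by blast
  finally show ?thesis
    using E by (simp add: space_pair_measure)
qed

lemma Int_stable_pair_pair_measure_generator:
  "Int_stable {C \<times> (A \<times> B) | C A B. C \<in> sets M1 \<and> A \<in> sets M2 \<and> B \<in> sets M3}"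
    (is "Int_stable ?E")
proof (rule Int_stableI)
  fix X Y assume "X \<in> ?E" "Y \<in> ?E"
  then obtain C A B C' A' B' where "X = C \<times> (A \<times> B)" "Y = C' \<times> (A' \<times> B')"
    and "C \<in> sets M1" "A \<in> sets M2" "B \<in> sets M3" "C' \<in> sets M1" "A' \<in> sets M2" "B' \<in> sets M3"
    by blast
  moreover have "C \<times> (A \<times> B) \<inter> C' \<times> (A' \<times> B') = (C \<inter> C') \<times> ((A \<inter> A') \<times> (B \<inter> B'))"
    by (simp add: Times_Int_Times)
  ultimately show "X \<inter> Y \<in> ?E"
    by blast
qed

text \<open>Given \<open>K = \<kappa>\<close>, the vectors \<open>U\<close> and \<open>V\<close> are independent with i.i.d. coordinates of
  densities \<open>f \<kappa>\<close> and \<open>g \<kappa>\<close>.\<close>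

definition has_cond_product_densities ::
    "'a measure \<Rightarrow> 'k measure \<Rightarrow> ('a \<Rightarrow> 'k) \<Rightarrow> 'i set \<Rightarrow> ('a \<Rightarrow> 'i \<Rightarrow> real) \<Rightarrow> ('k \<Rightarrow> real \<Rightarrow> real)
      \<Rightarrow> 'j set \<Rightarrow> ('a \<Rightarrow> 'j \<Rightarrow> real) \<Rightarrow> ('k \<Rightarrow> real \<Rightarrow> real) \<Rightarrow> bool"
  where "has_cond_product_densities M KS K I U f J V g \<longleftrightarrow>
    (\<forall>C \<in> sets KS. \<forall>A \<in> sets (PiM I (\<lambda>_. borel)). \<forall>B \<in> sets (PiM J (\<lambda>_. borel)).
      emeasure M {\<omega> \<in> space M. K \<omega> \<in> C \<and> U \<omega> \<in> A \<and> V \<omega> \<in> B}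
      = (\<integral>\<^sup>+ \<kappa> \<in> C. (\<integral>\<^sup>+ a \<in> A. (\<Prod>j\<in>I. ennreal (f \<kappa> (a j))) \<partial>PiM I (\<lambda>_. lborel))
                  * (\<integral>\<^sup>+ b \<in> B. (\<Prod>j\<in>J. ennreal (g \<kappa> (b j))) \<partial>PiM J (\<lambda>_. lborel))
         \<partial>distr M KS K))"

lemma emeasure_flip_coords_symmetric_densities:
  fixes K :: "'a \<Rightarrow> 'k" and U :: "'a \<Rightarrow> 'i \<Rightarrow> real" and V :: "'a \<Rightarrow> 'j \<Rightarrow> real"
  assumes "finite I" "finite J"
    and U: "U \<in> M \<rightarrow>\<^sub>M PiM I (\<lambda>_. borel)" and V: "V \<in> M \<rightarrow>\<^sub>M PiM J (\<lambda>_. borel)"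
    and f: "(\<lambda>(\<kappa>, x). f \<kappa> x) \<in> borel_measurable (KS \<Otimes>\<^sub>M borel)"
    and g: "(\<lambda>(\<kappa>, x). g \<kappa> x) \<in> borel_measurable (KS \<Otimes>\<^sub>M borel)"
    and f_even: "\<And>\<kappa> x. f \<kappa> (- x) = f \<kappa> x" and g_even: "\<And>\<kappa> x. g \<kappa> (- x) = g \<kappa> x"
    and dens: "has_cond_product_densities M KS K I U f J V g"
    and C: "C \<in> sets KS" and A: "A \<in> sets (PiM I (\<lambda>_. borel))" and B: "B \<in> sets (PiM J (\<lambda>_. borel))"
  shows "emeasure M {\<omega> \<in> space M. K \<omega> \<in> C \<and> flip_coords I F (U \<omega>) \<in> A \<and> flip_coords J G (V \<omega>) \<in> B}
       = emeasure M {\<omega> \<in> space M. K \<omega> \<in> C \<and> U \<omega> \<in> A \<and> V \<omega> \<in> B}"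
proof -
  let ?PI = "PiM I (\<lambda>_. borel :: real measure)" and ?PJ = "PiM J (\<lambda>_. borel :: real measure)"
  define A' where "A' = flip_coords I F -` A \<inter> space ?PI"
  define B' where "B' = flip_coords J G -` B \<inter> space ?PJ"
  have A': "A' \<in> sets ?PI" and B': "B' \<in> sets ?PJ"
    unfolding A'_def B'_def using A B by measurable
  have f_slice: "f \<kappa> \<in> borel_measurable borel" "g \<kappa> \<in> borel_measurable borel" if "\<kappa> \<in> space KS" for \<kappa>
    using measurable_compose[OF measurable_Pair1'[OF that] f] measurable_compose[OF measurable_Pair1'[OF that] g]
    by simp_all
  have "{\<omega> \<in> space M. K \<omega> \<in> C \<and> flip_coords I F (U \<omega>) \<in> A \<and> flip_coords J G (V \<omega>) \<in> B}
      = {\<omega> \<in> space M. K \<omega> \<in> C \<and> U \<omega> \<in> A' \<and> V \<omega> \<in> B'}"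
    using measurable_space[OF U] measurable_space[OF V] by (auto simp: A'_def B'_def)
  then have "emeasure M {\<omega> \<in> space M. K \<omega> \<in> C \<and> flip_coords I F (U \<omega>) \<in> A \<and> flip_coords J G (V \<omega>) \<in> B}
      = (\<integral>\<^sup>+ \<kappa> \<in> C. (\<integral>\<^sup>+ a \<in> A'. (\<Prod>j\<in>I. ennreal (f \<kappa> (a j))) \<partial>PiM I (\<lambda>_. lborel))
                  * (\<integral>\<^sup>+ b \<in> B'. (\<Prod>j\<in>J. ennreal (g \<kappa> (b j))) \<partial>PiM J (\<lambda>_. lborel)) \<partial>distr M KS K)"
    using dens C A' B' unfolding has_cond_product_densities_def by simp
  also have "\<dots> = (\<integral>\<^sup>+ \<kappa> \<in> C. (\<integral>\<^sup>+ a \<in> A. (\<Prod>j\<in>I. ennreal (f \<kappa> (a j))) \<partial>PiM I (\<lambda>_. lborel))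
                  * (\<integral>\<^sup>+ b \<in> B. (\<Prod>j\<in>J. ennreal (g \<kappa> (b j))) \<partial>PiM J (\<lambda>_. lborel)) \<partial>distr M KS K)"
    unfolding A'_def B'_def
    using nn_integral_flip_coords_symmetric_density[OF \<open>finite I\<close> f_slice(1) f_even A]
      nn_integral_flip_coords_symmetric_density[OF \<open>finite J\<close> f_slice(2) g_even B]
    by (intro nn_integral_cong) simp
  also have "\<dots> = emeasure M {\<omega> \<in> space M. K \<omega> \<in> C \<and> U \<omega> \<in> A \<and> V \<omega> \<in> B}"
    using dens C A B unfolding has_cond_product_densities_def by simp
  finally show ?thesis .
qed

lemma distr_flip_coords_symmetric_densities:
  fixes K :: "'a \<Rightarrow> 'k" and U :: "'a \<Rightarrow> 'i \<Rightarrow> real" and V :: "'a \<Rightarrow> 'j \<Rightarrow> real"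
  assumes "finite_measure M" "finite I" "finite J"
    and K: "K \<in> M \<rightarrow>\<^sub>M KS"
    and U: "U \<in> M \<rightarrow>\<^sub>M PiM I (\<lambda>_. borel)" and V: "V \<in> M \<rightarrow>\<^sub>M PiM J (\<lambda>_. borel)"
    and f: "(\<lambda>(\<kappa>, x). f \<kappa> x) \<in> borel_measurable (KS \<Otimes>\<^sub>M borel)"
    and g: "(\<lambda>(\<kappa>, x). g \<kappa> x) \<in> borel_measurable (KS \<Otimes>\<^sub>M borel)"
    and f_even: "\<And>\<kappa> x. f \<kappa> (- x) = f \<kappa> x" and g_even: "\<And>\<kappa> x. g \<kappa> (- x) = g \<kappa> x"
    and dens: "has_cond_product_densities M KS K I U f J V g"
  shows "distr M (KS \<Otimes>\<^sub>M (PiM I (\<lambda>_. borel) \<Otimes>\<^sub>M PiM J (\<lambda>_. borel)))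
           (\<lambda>\<omega>. (K \<omega>, flip_coords I F (U \<omega>), flip_coords J G (V \<omega>)))
       = distr M (KS \<Otimes>\<^sub>M (PiM I (\<lambda>_. borel) \<Otimes>\<^sub>M PiM J (\<lambda>_. borel))) (\<lambda>\<omega>. (K \<omega>, U \<omega>, V \<omega>))"
    (is "distr M ?O ?Zf = distr M ?O ?Z")
proof -
  let ?PI = "PiM I (\<lambda>_. borel :: real measure)" and ?PJ = "PiM J (\<lambda>_. borel :: real measure)"
  let ?E = "{C \<times> (A \<times> B) | C A B. C \<in> sets KS \<and> A \<in> sets ?PI \<and> B \<in> sets ?PJ}"
  let ?\<Omega> = "space KS \<times> (space ?PI \<times> space ?PJ)"
  interpret finite_measure M by fact
  have Z: "?Z \<in> M \<rightarrow>\<^sub>M ?O" and Zf: "?Zf \<in> M \<rightarrow>\<^sub>M ?O"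
    using K U V by measurable
  have "emeasure (distr M ?O ?Zf) (C \<times> (A \<times> B)) = emeasure (distr M ?O ?Z) (C \<times> (A \<times> B))"
    if C: "C \<in> sets KS" and A: "A \<in> sets ?PI" and B: "B \<in> sets ?PJ" for C A B
  proof -
    have box: "C \<times> (A \<times> B) \<in> sets ?O"
      using C A B by simp
    have "?Zf -` (C \<times> (A \<times> B)) \<inter> space M
        = {\<omega> \<in> space M. K \<omega> \<in> C \<and> flip_coords I F (U \<omega>) \<in> A \<and> flip_coords J G (V \<omega>) \<in> B}"
      "?Z -` (C \<times> (A \<times> B)) \<inter> space M = {\<omega> \<in> space M. K \<omega> \<in> C \<and> U \<omega> \<in> A \<and> V \<omega> \<in> B}"
      by auto
    then show ?thesis
      using emeasure_flip_coords_symmetric_densities[OF assms(2-3) U V f g f_even g_even dens C A B]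
      by (simp add: emeasure_distr[OF Zf box] emeasure_distr[OF Z box])
  qed
  then show ?thesis
  proof (intro measure_eqI_generator_eq[OF Int_stable_pair_pair_measure_generator, where \<Omega> = ?\<Omega> and A = "\<lambda>_. ?\<Omega>"])
    show "?E \<subseteq> Pow ?\<Omega>"
      by (auto dest: sets.sets_into_space)
    show "sets (distr M ?O ?Zf) = sigma_sets ?\<Omega> ?E" "sets (distr M ?O ?Z) = sigma_sets ?\<Omega> ?E"
      by (simp_all add: sets_pair_pair_measure)
    show "range (\<lambda>_. ?\<Omega>) \<subseteq> ?E"
      by blast
    show "emeasure (distr M ?O ?Zf) ?\<Omega> \<noteq> \<infinity>"
      by (simp add: emeasure_distr[OF Zf] space_pair_measure[symmetric] del: space_pair_measure)
  qed auto
qed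

section \<open>Invariance under a symmetry chosen by an independent label\<close>

lemma (in prob_space) prob_eq_sum_indep_label:
  assumes "finite V"
    and L: "\<And>\<omega>. \<omega> \<in> space M \<Longrightarrow> L \<omega> \<in> V" "\<And>p. {\<omega> \<in> space M. L \<omega> = p} \<in> events"
    and Z: "Z \<in> M \<rightarrow>\<^sub>M N"
    and indep: "\<And>p H. H \<in> sets N \<Longrightarrow>
      prob {\<omega> \<in> space M. L \<omega> = p \<and> Z \<omega> \<in> H} = prob {\<omega> \<in> space M. L \<omega> = p} * prob {\<omega> \<in> space M. Z \<omega> \<in> H}"
    and S: "\<And>p. p \<in> V \<Longrightarrow> S p \<in> sets N"
  shows "prob {\<omega> \<in> space M. Z \<omega> \<in> S (L \<omega>)}
    = (\<Sum>p\<in>V. prob {\<omega> \<in> space M. L \<omega> = p} * prob {\<omega> \<in> space M. Z \<omega> \<in> S p})"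
proof -
  have "{\<omega> \<in> space M. L \<omega> = p \<and> Z \<omega> \<in> S p} = {\<omega> \<in> space M. L \<omega> = p} \<inter> (Z -` S p \<inter> space M)" for p
    by auto
  then have events: "{\<omega> \<in> space M. L \<omega> = p \<and> Z \<omega> \<in> S p} \<in> events" if "p \<in> V" for p
    using L(2) measurable_sets[OF Z S[OF that]] by simp
  have "{\<omega> \<in> space M. Z \<omega> \<in> S (L \<omega>)} = (\<Union>p\<in>V. {\<omega> \<in> space M. L \<omega> = p \<and> Z \<omega> \<in> S p})"
    using L(1) by auto
  also have "prob \<dots> = (\<Sum>p\<in>V. prob {\<omega> \<in> space M. L \<omega> = p \<and> Z \<omega> \<in> S p})"
    using \<open>finite V\<close> events by (intro finite_measure_finite_Union) (auto simp: disjoint_family_on_def)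
  finally show ?thesis
    using indep S by simp
qed

lemma (in prob_space) prob_eq_if_label_indep_and_invariant:
  assumes "finite V"
    and L: "\<And>\<omega>. \<omega> \<in> space M \<Longrightarrow> L \<omega> \<in> V" "\<And>p. {\<omega> \<in> space M. L \<omega> = p} \<in> events"
    and Z: "Z \<in> M \<rightarrow>\<^sub>M N"
    and indep: "\<And>p H. H \<in> sets N \<Longrightarrow>
      prob {\<omega> \<in> space M. L \<omega> = p \<and> Z \<omega> \<in> H} = prob {\<omega> \<in> space M. L \<omega> = p} * prob {\<omega> \<in> space M. Z \<omega> \<in> H}"
    and g: "\<And>p. p \<in> V \<Longrightarrow> g p \<in> N \<rightarrow>\<^sub>M N"
    and invariant: "\<And>p. p \<in> V \<Longrightarrow> distr M N (\<lambda>\<omega>. g p (Z \<omega>)) = distr M N Z"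
    and H: "\<And>p. p \<in> V \<Longrightarrow> H p \<in> sets N"
  shows "prob {\<omega> \<in> space M. Z \<omega> \<in> H (L \<omega>)} = prob {\<omega> \<in> space M. g (L \<omega>) (Z \<omega>) \<in> H (L \<omega>)}"
proof -
  have H_pullback: "g p -` H p \<inter> space N \<in> sets N" if "p \<in> V" for p
    by (rule measurable_sets[OF g[OF that] H[OF that]])
  have "prob {\<omega> \<in> space M. Z \<omega> \<in> H p} = prob {\<omega> \<in> space M. Z \<omega> \<in> g p -` H p \<inter> space N}"
    if p: "p \<in> V" for p
  proof -
    have "prob {\<omega> \<in> space M. Z \<omega> \<in> H p} = measure (distr M N (\<lambda>\<omega>. g p (Z \<omega>))) (H p)"
      by (simp add: invariant[OF p] measure_distr[OF Z H[OF p]] vimage_def Int_def conj_commute)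
    also have "\<dots> = prob {\<omega> \<in> space M. Z \<omega> \<in> g p -` H p \<inter> space N}"
      using measurable_space[OF Z]
      by (subst measure_distr[OF measurable_compose[OF Z g[OF p]] H[OF p]]) (auto intro!: arg_cong[where f = prob])
    finally show ?thesis .
  qed
  then have "prob {\<omega> \<in> space M. Z \<omega> \<in> H (L \<omega>)}
      = prob {\<omega> \<in> space M. Z \<omega> \<in> g (L \<omega>) -` H (L \<omega>) \<inter> space N}"
    using prob_eq_sum_indep_label[where S = H] prob_eq_sum_indep_label[where S = "\<lambda>p. g p -` H p \<inter> space N"]
      assms(1-5) H H_pullback
    by simp
  also have "{\<omega> \<in> space M. Z \<omega> \<in> g (L \<omega>) -` H (L \<omega>) \<inter> space N} = {\<omega> \<in> space M. g (L \<omega>) (Z \<omega>) \<in> H (L \<omega>)}"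
    using measurable_space[OF Z] by auto
  finally show ?thesis .
qed

section \<open>The split two-sample model\<close>

lemma ceiling_half_complement_nonempty:
  assumes "2 \<le> n" "S \<subseteq> {..<n}" "card S = nat \<lceil>real n / 2\<rceil>"
  shows "{..<n} - S \<noteq> {}"
proof -
  have "\<lceil>real n / 2\<rceil> < int n"
    using assms(1) by (simp add: ceiling_less_iff)
  moreover have "card ({..<n} - S) = n - card S"
    using assms(2) by (simp add: card_Diff_subset finite_subset)
  ultimately have "card ({..<n} - S) \<noteq> 0"
    using assms(3) by linarith
  then show ?thesis
    by auto
qed

lemma valid_partitions_subset:
  assumes "p \<in> valid_partitions m nx ny" "k < m"
  shows "fst (p k) \<subseteq> {..<nx k}" "snd (p k) \<subseteq> {..<ny k}"
  using assms by (simp_all add: valid_partitions_def)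

lemma valid_partitions_second_half_nonempty:
  assumes "p \<in> valid_partitions m nx ny" "k < m" "2 \<le> nx k" "2 \<le> ny k"
  shows "{..<nx k} - fst (p k) \<noteq> {}" "{..<ny k} - snd (p k) \<noteq> {}"
  using assms ceiling_half_complement_nonempty[of "nx k" "fst (p k)"]
    ceiling_half_complement_nonempty[of "ny k" "snd (p k)"]
  by (simp_all add: valid_partitions_def)

lemma finite_valid_partitions: "finite (valid_partitions m nx ny)"
proof (rule finite_imageD)
  show "inj_on (\<lambda>p. restrict p {..<m}) (valid_partitions m nx ny)"
  proof (rule inj_onI, rule ext)
    fix p q k
    assume "p \<in> valid_partitions m nx ny" "q \<in> valid_partitions m nx ny"
      and "restrict p {..<m} = restrict q {..<m}"
    then show "p k = q k"
      by (cases "k < m") (auto simp: valid_partitions_def dest: fun_cong[of _ _ k])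
  qed
  have "(\<lambda>p. restrict p {..<m}) ` valid_partitions m nx ny \<subseteq> (\<Pi>\<^sub>E k\<in>{..<m}. Pow {..<nx k} \<times> Pow {..<ny k})"
    by (intro image_subsetI) (auto simp: restrict_PiE_iff valid_partitions_def mem_Times_iff)
  then show "finite ((\<lambda>p. restrict p {..<m}) ` valid_partitions m nx ny)"
    by (rule finite_subset) (intro finite_PiE finite_cartesian_product; simp)
qed

type_synonym sample_pair = "(nat \<Rightarrow> real) \<times> (nat \<Rightarrow> real)"

locale split_two_sample_model = prob_space M
  for M :: "'a measure" and m :: nat and nx ny :: "nat \<Rightarrow> nat" and mux muy :: "nat \<Rightarrow> real"
    and ex ey :: "nat \<Rightarrow> nat \<Rightarrow> 'a \<Rightarrow> real" and Part :: "'a \<Rightarrow> nat \<Rightarrow> nat set \<times> nat set" +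
  assumes nx_ge_2: "k < m \<Longrightarrow> 2 \<le> nx k" and ny_ge_2: "k < m \<Longrightarrow> 2 \<le> ny k"
    and ex_measurable: "k < m \<Longrightarrow> j < nx k \<Longrightarrow> ex k j \<in> borel_measurable M"
    and ey_measurable: "k < m \<Longrightarrow> j < ny k \<Longrightarrow> ey k j \<in> borel_measurable M"
    and Part_valid: "\<omega> \<in> space M \<Longrightarrow> Part \<omega> \<in> valid_partitions m nx ny"
    and Part_events: "{\<omega> \<in> space M. Part \<omega> = p} \<in> events"
    and Part_indep: "E \<in> sets (PiM {..<m} (group_space nx ny)) \<Longrightarrow>
      prob {\<omega> \<in> space M. Part \<omega> = p \<and>
              (\<lambda>k\<in>{..<m}. ((\<lambda>j\<in>{..<nx k}. ex k j \<omega>), (\<lambda>j\<in>{..<ny k}. ey k j \<omega>))) \<in> E}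
      = prob {\<omega> \<in> space M. Part \<omega> = p}
        * prob {\<omega> \<in> space M. (\<lambda>k\<in>{..<m}. ((\<lambda>j\<in>{..<nx k}. ex k j \<omega>), (\<lambda>j\<in>{..<ny k}. ey k j \<omega>))) \<in> E}"
begin

definition errors :: "nat \<Rightarrow> 'a \<Rightarrow> sample_pair"
  where "errors k \<omega> = ((\<lambda>j\<in>{..<nx k}. ex k j \<omega>), (\<lambda>j\<in>{..<ny k}. ey k j \<omega>))"

definition observations :: "nat \<Rightarrow> sample_pair \<Rightarrow> sample_pair"
  where "observations k e = ((\<lambda>j\<in>{..<nx k}. mux k + fst e j), (\<lambda>j\<in>{..<ny k}. muy k + snd e j))"

definition K_minus :: "nat \<Rightarrow> 'a \<Rightarrow> nat \<Rightarrow> sample_pair"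
  where "K_minus i \<omega> =
    (\<lambda>k\<in>{..<m} - {i}. ((\<lambda>j\<in>{..<nx k}. mux k + ex k j \<omega>), (\<lambda>j\<in>{..<ny k}. muy k + ey k j \<omega>)))"

definition group_stats :: "nat \<Rightarrow> 'a \<Rightarrow> real \<times> real"
  where "group_stats k \<omega> = T_pair (nx k) (ny k) (Part \<omega> k) ((\<lambda>j. mux k + ex k j \<omega>), (\<lambda>j. muy k + ey k j \<omega>))"

text \<open>All statistics are functions of the partition and of the view of group \<open>i\<close>: the
  observations \<open>K_minus i\<close> of the other groups (\<open>K_{-i}\<close> in the paper) together with the errors
  of group \<open>i\<close>, whose conditional law given \<open>K_minus i\<close> is assumed.\<close>

abbreviation view_space :: "nat \<Rightarrow> ((nat \<Rightarrow> sample_pair) \<times> sample_pair) measure"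
  where "view_space i \<equiv> PiM ({..<m} - {i}) (group_space nx ny) \<Otimes>\<^sub>M group_space nx ny i"

definition view :: "nat \<Rightarrow> 'a \<Rightarrow> (nat \<Rightarrow> sample_pair) \<times> sample_pair"
  where "view i \<omega> = (K_minus i \<omega>, errors i \<omega>)"

definition view_stats :: "nat \<Rightarrow> (nat \<Rightarrow> nat set \<times> nat set) \<Rightarrow> (nat \<Rightarrow> sample_pair) \<times> sample_pair
    \<Rightarrow> (real \<times> real) \<times> (nat \<Rightarrow> real \<times> real)"
  where "view_stats i p z =
    (T_pair (nx i) (ny i) (p i) (observations i (snd z)), \<lambda>k\<in>{..<m} - {i}. T_pair (nx k) (ny k) (p k) (fst z k))"

definition flip_second_halves :: "nat \<Rightarrow> (nat \<Rightarrow> nat set \<times> nat set)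
    \<Rightarrow> (nat \<Rightarrow> sample_pair) \<times> sample_pair \<Rightarrow> (nat \<Rightarrow> sample_pair) \<times> sample_pair"
  where "flip_second_halves i p z =
    (fst z, flip_coords {..<nx i} ({..<nx i} - fst (p i)) (fst (snd z)),
            flip_coords {..<ny i} ({..<ny i} - snd (p i)) (snd (snd z)))"

lemma measurable_errors: "k < m \<Longrightarrow> errors k \<in> M \<rightarrow>\<^sub>M group_space nx ny k"
  unfolding errors_def group_space_def
  by (intro measurable_Pair measurable_restrict) (auto intro: ex_measurable ey_measurable)

lemma measurable_observations [measurable]: "observations k \<in> group_space nx ny k \<rightarrow>\<^sub>M group_space nx ny k"
  unfolding observations_def group_space_def by measurable

lemma K_minus_eq: "K_minus i \<omega> = (\<lambda>k\<in>{..<m} - {i}. observations k (errors k \<omega>))"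
  by (auto simp: K_minus_def observations_def errors_def fun_eq_iff)

lemma measurable_view: "i < m \<Longrightarrow> view i \<in> M \<rightarrow>\<^sub>M view_space i"
  unfolding view_def K_minus_eq
  by (intro measurable_Pair measurable_restrict measurable_compose[OF measurable_errors measurable_observations]
      measurable_errors) auto

lemma view_stats_view:
  assumes "\<omega> \<in> space M" "i < m"
  shows "view_stats i (Part \<omega>) (view i \<omega>) = (group_stats i \<omega>, \<lambda>k\<in>{..<m} - {i}. group_stats k \<omega>)"
proof -
  have observed: "T_pair (nx k) (ny k) (Part \<omega> k)
      ((\<lambda>j\<in>{..<nx k}. mux k + ex k j \<omega>), (\<lambda>j\<in>{..<ny k}. muy k + ey k j \<omega>)) = group_stats k \<omega>"
    if "k < m" for k
    unfolding group_stats_def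
    using valid_partitions_subset[OF Part_valid[OF assms(1)] that] by (rule T_pair_cong) auto
  have "observations i (errors i \<omega>) = ((\<lambda>j\<in>{..<nx i}. mux i + ex i j \<omega>), (\<lambda>j\<in>{..<ny i}. muy i + ey i j \<omega>))"
    by (auto simp: observations_def errors_def fun_eq_iff)
  moreover have "(\<lambda>k\<in>{..<m} - {i}. T_pair (nx k) (ny k) (Part \<omega> k) (K_minus i \<omega> k))
      = (\<lambda>k\<in>{..<m} - {i}. group_stats k \<omega>)"
    by (rule restrict_ext) (simp add: K_minus_def observed)
  ultimately show ?thesis
    using observed[OF assms(2)] by (simp add: view_stats_def view_def)
qed

lemma measurable_view_stats:
  assumes "p \<in> valid_partitions m nx ny" "i < m"
  shows "view_stats i p \<in> view_space i \<rightarrow>\<^sub>M borel \<Otimes>\<^sub>M PiM ({..<m} - {i}) (\<lambda>_. borel)"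
proof -
  have [measurable]: "T_pair (nx k) (ny k) (p k) \<in> group_space nx ny k \<rightarrow>\<^sub>M borel" if "k < m" for k
    unfolding group_space_def
    using valid_partitions_subset[OF assms(1) that] by (rule measurable_T_pair)
  show ?thesis
    unfolding view_stats_def using assms(2) by measurable
qed

lemma measurable_flip_second_halves: "flip_second_halves i p \<in> view_space i \<rightarrow>\<^sub>M view_space i"
  unfolding flip_second_halves_def group_space_def by measurable

lemma view_stats_flip_second_halves:
  assumes "p \<in> valid_partitions m nx ny" "i < m" "mux i = muy i"
  shows "view_stats i p (flip_second_halves i p z) = apfst prod.swap (view_stats i p z)"
proof -
  have "T_pair (nx i) (ny i) (p i) (observations i (snd (flip_second_halves i p z)))
      = prod.swap (T_pair (nx i) (ny i) (p i) (observations i (snd z)))"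
    unfolding observations_def flip_second_halves_def snd_conv fst_conv
    using valid_partitions_second_half_nonempty[OF assms(1,2) nx_ge_2[OF assms(2)] ny_ge_2[OF assms(2)]]
    by (intro T_pair_reflect_second_halves[where c = "2 * muy i"]) (auto simp: flip_coords_def assms(3))
  then show ?thesis
    by (simp add: view_stats_def flip_second_halves_def)
qed

lemma Part_indep_view:
  assumes "i < m" "H \<in> sets (view_space i)"
  shows "prob {\<omega> \<in> space M. Part \<omega> = p \<and> view i \<omega> \<in> H}
    = prob {\<omega> \<in> space M. Part \<omega> = p} * prob {\<omega> \<in> space M. view i \<omega> \<in> H}"
proof -
  let ?W = "PiM {..<m} (group_space nx ny)"
  define h where "h w = ((\<lambda>k\<in>{..<m} - {i}. observations k (w k)), w i)" for w :: "nat \<Rightarrow> sample_pair"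
  have "h \<in> ?W \<rightarrow>\<^sub>M view_space i"
    unfolding h_def using assms(1)
    by (intro measurable_Pair measurable_restrict measurable_compose[OF _ measurable_observations]
        measurable_component_singleton) auto
  then have E: "h -` H \<inter> space ?W \<in> sets ?W"
    using assms(2) by (rule measurable_sets)
  have data: "(\<lambda>k\<in>{..<m}. errors k \<omega>) \<in> space ?W" if "\<omega> \<in> space M" for \<omega>
    using measurable_space[OF measurable_errors that] by (auto simp: space_PiM)
  have "view i \<omega> = h (\<lambda>k\<in>{..<m}. errors k \<omega>)" for \<omega>
    using assms(1) by (auto simp: view_def h_def K_minus_eq intro!: restrict_ext)
  then have "{\<omega> \<in> space M. Q \<omega> \<and> view i \<omega> \<in> H}
      = {\<omega> \<in> space M. Q \<omega> \<and> (\<lambda>k\<in>{..<m}. errors k \<omega>) \<in> h -` H \<inter> space ?W}" for Q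
    using data by auto
  from this[of "\<lambda>\<omega>. Part \<omega> = p"] this[of "\<lambda>_. True"] show ?thesis
    using Part_indep[OF E, of p] by (simp add: errors_def)
qed

lemma distr_flip_second_halves_view:
  assumes "i < m"
    and fx: "(\<lambda>(\<kappa>, x). fx \<kappa> x) \<in> borel_measurable (PiM ({..<m} - {i}) (group_space nx ny) \<Otimes>\<^sub>M borel)"
    and fy: "(\<lambda>(\<kappa>, y). fy \<kappa> y) \<in> borel_measurable (PiM ({..<m} - {i}) (group_space nx ny) \<Otimes>\<^sub>M borel)"
    and even: "\<And>\<kappa> x. fx \<kappa> (- x) = fx \<kappa> x" "\<And>\<kappa> y. fy \<kappa> (- y) = fy \<kappa> y"
    and dens: "has_cond_product_densities M (PiM ({..<m} - {i}) (group_space nx ny)) (K_minus i)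
      {..<nx i} (\<lambda>\<omega>. \<lambda>j\<in>{..<nx i}. ex i j \<omega>) fx {..<ny i} (\<lambda>\<omega>. \<lambda>j\<in>{..<ny i}. ey i j \<omega>) fy"
  shows "distr M (view_space i) (\<lambda>\<omega>. flip_second_halves i p (view i \<omega>)) = distr M (view_space i) (view i)"
proof -
  have K: "K_minus i \<in> M \<rightarrow>\<^sub>M PiM ({..<m} - {i}) (group_space nx ny)"
    using measurable_compose[OF measurable_view[OF assms(1)] measurable_fst] by (simp add: view_def)
  have U: "(\<lambda>\<omega>. \<lambda>j\<in>{..<nx i}. ex i j \<omega>) \<in> M \<rightarrow>\<^sub>M PiM {..<nx i} (\<lambda>_. borel)"
    and V: "(\<lambda>\<omega>. \<lambda>j\<in>{..<ny i}. ey i j \<omega>) \<in> M \<rightarrow>\<^sub>M PiM {..<ny i} (\<lambda>_. borel)"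
    using measurable_compose[OF measurable_errors[OF assms(1), unfolded group_space_def] measurable_fst]
      measurable_compose[OF measurable_errors[OF assms(1), unfolded group_space_def] measurable_snd]
    by (simp_all add: errors_def)
  show ?thesis
    using distr_flip_coords_symmetric_densities[OF finite_measure
        finite_lessThan finite_lessThan K U V fx fy even dens]
    unfolding view_def flip_second_halves_def group_space_def errors_def by simp
qed

theorem null_group_stats_exchangeable:
  assumes i: "i < m" and null: "mux i = muy i"
    and fx: "(\<lambda>(\<kappa>, x). fx \<kappa> x) \<in> borel_measurable (PiM ({..<m} - {i}) (group_space nx ny) \<Otimes>\<^sub>M borel)"
    and fy: "(\<lambda>(\<kappa>, y). fy \<kappa> y) \<in> borel_measurable (PiM ({..<m} - {i}) (group_space nx ny) \<Otimes>\<^sub>M borel)"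
    and even: "\<And>\<kappa> x. fx \<kappa> (- x) = fx \<kappa> x" "\<And>\<kappa> y. fy \<kappa> (- y) = fy \<kappa> y"
    and dens: "has_cond_product_densities M (PiM ({..<m} - {i}) (group_space nx ny)) (K_minus i)
      {..<nx i} (\<lambda>\<omega>. \<lambda>j\<in>{..<nx i}. ex i j \<omega>) fx {..<ny i} (\<lambda>\<omega>. \<lambda>j\<in>{..<ny i}. ey i j \<omega>) fy"
    and A: "A \<in> sets borel" and B: "B \<in> sets (PiM ({..<m} - {i}) (\<lambda>_. borel))"
  shows "prob {\<omega> \<in> space M. group_stats i \<omega> \<in> A \<and> (\<lambda>k\<in>{..<m} - {i}. group_stats k \<omega>) \<in> B}
       = prob {\<omega> \<in> space M. prod.swap (group_stats i \<omega>) \<in> A \<and> (\<lambda>k\<in>{..<m} - {i}. group_stats k \<omega>) \<in> B}"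
proof -
  define H where "H p = view_stats i p -` (A \<times> B) \<inter> space (view_space i)" for p
  have "view i \<omega> \<in> H (Part \<omega>)
      \<longleftrightarrow> group_stats i \<omega> \<in> A \<and> (\<lambda>k\<in>{..<m} - {i}. group_stats k \<omega>) \<in> B"
    "flip_second_halves i (Part \<omega>) (view i \<omega>) \<in> H (Part \<omega>)
      \<longleftrightarrow> prod.swap (group_stats i \<omega>) \<in> A \<and> (\<lambda>k\<in>{..<m} - {i}. group_stats k \<omega>) \<in> B"
    if "\<omega> \<in> space M" for \<omega>
    using measurable_space[OF measurable_view[OF i] that]
      measurable_space[OF measurable_flip_second_halves measurable_space[OF measurable_view[OF i] that]]
    by (simp_all add: H_def view_stats_view[OF that i] view_stats_flip_second_halves[OF Part_valid[OF that] i null])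
  then have events:
    "{\<omega> \<in> space M. view i \<omega> \<in> H (Part \<omega>)}
      = {\<omega> \<in> space M. group_stats i \<omega> \<in> A \<and> (\<lambda>k\<in>{..<m} - {i}. group_stats k \<omega>) \<in> B}"
    "{\<omega> \<in> space M. flip_second_halves i (Part \<omega>) (view i \<omega>) \<in> H (Part \<omega>)}
      = {\<omega> \<in> space M. prod.swap (group_stats i \<omega>) \<in> A \<and> (\<lambda>k\<in>{..<m} - {i}. group_stats k \<omega>) \<in> B}"
    by auto
  have "prob {\<omega> \<in> space M. view i \<omega> \<in> H (Part \<omega>)}
      = prob {\<omega> \<in> space M. flip_second_halves i (Part \<omega>) (view i \<omega>) \<in> H (Part \<omega>)}"
  proof (rule prob_eq_if_label_indep_and_invariant[OF finite_valid_partitions Part_valid Part_events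
        measurable_view[OF i] Part_indep_view[OF i] measurable_flip_second_halves
        distr_flip_second_halves_view[OF i fx fy even dens]])
    fix p assume p: "p \<in> valid_partitions m nx ny"
    show "H p \<in> sets (view_space i)"
      unfolding H_def using A B by (intro measurable_sets[OF measurable_view_stats[OF p i]]) simp
  qed
  with events show ?thesis
    by simp
qed

end

theorem theorem2:
  fixes M :: "'a measure" and m :: nat and nx ny :: "nat \<Rightarrow> nat"
    and mux muy :: "nat \<Rightarrow> real"
    and ex ey :: "nat \<Rightarrow> nat \<Rightarrow> 'a \<Rightarrow> real"
    and Part :: "'a \<Rightarrow> nat \<Rightarrow> nat set \<times> nat set"
    and X Y :: "nat \<Rightarrow> nat \<Rightarrow> 'a \<Rightarrow> real"
    and Kminus :: "nat \<Rightarrow> 'a \<Rightarrow> nat \<Rightarrow> (nat \<Rightarrow> real) \<times> (nat \<Rightarrow> real)"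
    and T T0 :: "nat \<Rightarrow> 'a \<Rightarrow> real"
  assumes prob: "prob_space M"
    and m_pos: "m \<ge> 1"
    and nx_ge: "\<forall>k<m. nx k \<ge> 4" and ny_ge: "\<forall>k<m. ny k \<ge> 4"
    and meas_x: "\<forall>k<m. \<forall>j<nx k. ex k j \<in> borel_measurable M"
    and meas_y: "\<forall>k<m. \<forall>j<ny k. ey k j \<in> borel_measurable M"
    and mean0_x: "\<forall>k<m. \<forall>j<nx k. integrable M (ex k j) \<and> (\<integral>\<omega>. ex k j \<omega> \<partial>M) = 0"
    and mean0_y: "\<forall>k<m. \<forall>j<ny k. integrable M (ey k j) \<and> (\<integral>\<omega>. ey k j \<omega> \<partial>M) = 0"
    and X_def: "X \<equiv> \<lambda>k j \<omega>. mux k + ex k j \<omega>"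
    and Y_def: "Y \<equiv> \<lambda>k j \<omega>. muy k + ey k j \<omega>"
    and K_def: "Kminus \<equiv> \<lambda>i \<omega>. (\<lambda>k\<in>{..<m} - {i}.
                   ((\<lambda>j\<in>{..<nx k}. X k j \<omega>), (\<lambda>j\<in>{..<ny k}. Y k j \<omega>)))"
    \<comment> \<open>conditional structure of the errors of each null group given K_{-i}\<close>
    and cond_null: "\<forall>i<m. mux i = muy i \<longrightarrow>
       (\<exists>fx fy :: (nat \<Rightarrow> (nat \<Rightarrow> real) \<times> (nat \<Rightarrow> real)) \<Rightarrow> real \<Rightarrow> real.
          (\<lambda>(\<kappa>, x). fx \<kappa> x) \<in> borel_measurable (PiM ({..<m} - {i}) (group_space nx ny) \<Otimes>\<^sub>M borel)
        \<and> (\<lambda>(\<kappa>, y). fy \<kappa> y) \<in> borel_measurable (PiM ({..<m} - {i}) (group_space nx ny) \<Otimes>\<^sub>M borel)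
        \<and> (\<forall>\<kappa> x. fx \<kappa> x \<ge> 0 \<and> fy \<kappa> x \<ge> 0)
        \<and> (\<forall>\<kappa>. (\<integral>\<^sup>+ x. ennreal (fx \<kappa> x) \<partial>lborel) = 1 \<and> (\<integral>\<^sup>+ y. ennreal (fy \<kappa> y) \<partial>lborel) = 1)
        \<and> (\<forall>\<kappa> x. fx \<kappa> (- x) = fx \<kappa> x \<and> fy \<kappa> (- x) = fy \<kappa> x)
        \<and> (\<forall>C \<in> sets (PiM ({..<m} - {i}) (group_space nx ny)).
           \<forall>A \<in> sets (PiM {..<nx i} (\<lambda>_. borel :: real measure)).
           \<forall>B \<in> sets (PiM {..<ny i} (\<lambda>_. borel :: real measure)).
             emeasure M {\<omega> \<in> space M. Kminus i \<omega> \<in> C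
                  \<and> (\<lambda>j\<in>{..<nx i}. ex i j \<omega>) \<in> A \<and> (\<lambda>j\<in>{..<ny i}. ey i j \<omega>) \<in> B}
             = (\<integral>\<^sup>+ \<kappa> \<in> C.
                  (\<integral>\<^sup>+ a \<in> A. (\<Prod>j<nx i. ennreal (fx \<kappa> (a j))) \<partial>PiM {..<nx i} (\<lambda>_. lborel))
                * (\<integral>\<^sup>+ b \<in> B. (\<Prod>j<ny i. ennreal (fy \<kappa> (b j))) \<partial>PiM {..<ny i} (\<lambda>_. lborel))
                \<partial>distr M (PiM ({..<m} - {i}) (group_space nx ny)) (Kminus i))))"
    \<comment> \<open>random partitions, independent of the data\<close>
    and part_valid: "\<forall>\<omega>\<in>space M. Part \<omega> \<in> valid_partitions m nx ny"
    and part_meas: "\<forall>p. {\<omega> \<in> space M. Part \<omega> = p} \<in> sets M"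
    and part_indep: "\<forall>p. \<forall>E \<in> sets (PiM {..<m} (\<lambda>k. PiM {..<nx k} (\<lambda>_. borel :: real measure) \<Otimes>\<^sub>M PiM {..<ny k} (\<lambda>_. borel :: real measure))).
        measure M {\<omega> \<in> space M. Part \<omega> = p \<and>
            (\<lambda>k\<in>{..<m}. ((\<lambda>j\<in>{..<nx k}. ex k j \<omega>), (\<lambda>j\<in>{..<ny k}. ey k j \<omega>))) \<in> E}
        = measure M {\<omega> \<in> space M. Part \<omega> = p}
          * measure M {\<omega> \<in> space M. (\<lambda>k\<in>{..<m}. ((\<lambda>j\<in>{..<nx k}. ex k j \<omega>), (\<lambda>j\<in>{..<ny k}. ey k j \<omega>))) \<in> E}"
    and T_def: "T \<equiv> \<lambda>k \<omega>. T_stat (nx k) (ny k) (fst (Part \<omega> k)) (snd (Part \<omega> k)) (\<lambda>j. X k j \<omega>) (\<lambda>j. Y k j \<omega>)"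
    and T0_def: "T0 \<equiv> \<lambda>k \<omega>. T0_stat (nx k) (ny k) (fst (Part \<omega> k)) (snd (Part \<omega> k)) (\<lambda>j. X k j \<omega>) (\<lambda>j. Y k j \<omega>)"
  shows "\<forall>i<m. mux i = muy i \<longrightarrow>
     (\<forall>A \<in> sets (borel :: (real \<times> real) measure).
      \<forall>B \<in> sets (PiM ({..<m} - {i}) (\<lambda>_. borel :: (real \<times> real) measure)).
        measure M {\<omega> \<in> space M. (T i \<omega>, T0 i \<omega>) \<in> A \<and> (\<lambda>k\<in>{..<m} - {i}. (T k \<omega>, T0 k \<omega>)) \<in> B}
      = measure M {\<omega> \<in> space M. (T0 i \<omega>, T i \<omega>) \<in> A \<and> (\<lambda>k\<in>{..<m} - {i}. (T k \<omega>, T0 k \<omega>)) \<in> B})"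
proof (intro allI impI ballI)
  fix i A B
  assume i: "i < m" and null: "mux i = muy i"
    and A: "A \<in> sets (borel :: (real \<times> real) measure)"
    and B: "B \<in> sets (PiM ({..<m} - {i}) (\<lambda>_. borel :: (real \<times> real) measure))"
  interpret split_two_sample_model M m nx ny mux muy ex ey Part
    using nx_ge ny_ge meas_x meas_y part_valid part_meas part_indep
    by (intro split_two_sample_model.intro split_two_sample_model_axioms.intro prob)
      (auto simp: group_space_def[abs_def])
  have Kminus_eq: "Kminus i = K_minus i"
    unfolding K_def X_def Y_def by (simp add: fun_eq_iff K_minus_def)
  obtain fx fy where
    fx: "(\<lambda>(\<kappa>, x). fx \<kappa> x) \<in> borel_measurable (PiM ({..<m} - {i}) (group_space nx ny) \<Otimes>\<^sub>M borel)"
    and fy: "(\<lambda>(\<kappa>, y). fy \<kappa> y) \<in> borel_measurable (PiM ({..<m} - {i}) (group_space nx ny) \<Otimes>\<^sub>M borel)"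
    and even: "\<forall>\<kappa> x. fx \<kappa> (- x) = fx \<kappa> x \<and> fy \<kappa> (- x) = fy \<kappa> x"
    and dens: "has_cond_product_densities M (PiM ({..<m} - {i}) (group_space nx ny)) (K_minus i)
      {..<nx i} (\<lambda>\<omega>. \<lambda>j\<in>{..<nx i}. ex i j \<omega>) fx {..<ny i} (\<lambda>\<omega>. \<lambda>j\<in>{..<ny i}. ey i j \<omega>) fy"
    using cond_null[rule_format, OF i null] unfolding has_cond_product_densities_def Kminus_eq by blast
  have "\<And>\<kappa> x. fx \<kappa> (- x) = fx \<kappa> x" "\<And>\<kappa> y. fy \<kappa> (- y) = fy \<kappa> y"
    using even by simp_all
  note exchangeable = null_group_stats_exchangeable[OF i null fx fy this dens A B]
  have "(T k \<omega>, T0 k \<omega>) = group_stats k \<omega>" "(T0 k \<omega>, T k \<omega>) = prod.swap (group_stats k \<omega>)" for k \<omega>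
    unfolding T_def T0_def X_def Y_def group_stats_def T_pair_def by simp_all
  then show "measure M {\<omega> \<in> space M. (T i \<omega>, T0 i \<omega>) \<in> A \<and> (\<lambda>k\<in>{..<m} - {i}. (T k \<omega>, T0 k \<omega>)) \<in> B}
      = measure M {\<omega> \<in> space M. (T0 i \<omega>, T i \<omega>) \<in> A \<and> (\<lambda>k\<in>{..<m} - {i}. (T k \<omega>, T0 k \<omega>)) \<in> B}"
    by (simp only: exchangeable)
qed

end
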